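(* Let $p(a,b\mid x_0,x_1,y,y')$ be a non-signalling racbox. Define a two-input, two-output box $q$ by fixing Alice's first input to $0$ and Bob's second input to $0$: $$q(a,b\mid x,y) := p(a,b\mid x_0=0,\ x_1=x,\ y,\ y'=0), \qquad x,y\in\{0,1\}.$$ Then $q$ is the PR-box, that is, for all $x,y,a,b\in\{0,1\}$, $$q(a,b\mid x,y)=\begin{cases}\tfrac12 & \text{if } a\oplus b = xy,\\ 0 & \text{otherwise.}\end{cases}$$
   Context: A box is a family of conditional probability distributions $p(a,b\mid x_0,x_1,y,y')$ with $a,b,x_0,x_1,y,y'\in\{0,1\}$. Alice holds inputs $x_0,x_1$ and output $a$; Bob holds inputs $y,y'$ and output $b$. A racbox is a box with two properties. First, it is non-signalling from Bob to Alice: $p(a\mid x_0,x_1,y,y')$ does not depend on $(y,y')$. Second, whenever $a=y'$ one has $b=x_y$ with certainty. A racbox is non-signalling if, in addition, Bob's marginal $p(b\mid x_0,x_1,y,y')$ does not depend on $(x_0,x_1)$. *)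

theory Defs
  imports Complex_Main
begin

text \<open>Bits are encoded as bool (False = 0, True = 1).
  A box p a b x0 x1 y y' is the probability p(a,b | x0,x1,y,y').\<close>

type_synonym box = "bool \<Rightarrow> bool \<Rightarrow> bool \<Rightarrow> bool \<Rightarrow> bool \<Rightarrow> bool \<Rightarrow> real"

definition is_box :: "box \<Rightarrow> bool" where
  "is_box p \<longleftrightarrow>
     (\<forall>a b x0 x1 y y'. p a b x0 x1 y y' \<ge> 0) \<and>
     (\<forall>x0 x1 y y'. (\<Sum>a\<in>UNIV. \<Sum>b\<in>UNIV. p a b x0 x1 y y') = 1)"

definition alice_marg :: "box \<Rightarrow> bool \<Rightarrow> bool \<Rightarrow> bool \<Rightarrow> bool \<Rightarrow> bool \<Rightarrow> real" where
  "alice_marg p a x0 x1 y y' = (\<Sum>b\<in>UNIV. p a b x0 x1 y y')"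

definition bob_marg :: "box \<Rightarrow> bool \<Rightarrow> bool \<Rightarrow> bool \<Rightarrow> bool \<Rightarrow> bool \<Rightarrow> real" where
  "bob_marg p b x0 x1 y y' = (\<Sum>a\<in>UNIV. p a b x0 x1 y y')"

definition sel :: "bool \<Rightarrow> bool \<Rightarrow> bool \<Rightarrow> bool" where
  "sel x0 x1 y = (if y then x1 else x0)"

definition is_racbox :: "box \<Rightarrow> bool" where
  "is_racbox p \<longleftrightarrow> is_box p \<and>
     (\<forall>a x0 x1 y y' z z'. alice_marg p a x0 x1 y y' = alice_marg p a x0 x1 z z') \<and>
     (\<forall>x0 x1 y y' b. b \<noteq> sel x0 x1 y \<longrightarrow> p y' b x0 x1 y y' = 0)"

definition is_ns_racbox :: "box \<Rightarrow> bool" where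
  "is_ns_racbox p \<longleftrightarrow> is_racbox p \<and>
     (\<forall>b x0 x1 z0 z1 y y'. bob_marg p b x0 x1 y y' = bob_marg p b z0 z1 y y')"

end

theory Submission
  imports Defs
begin

(* In a racbox Bob outputs the requested bit x_y whenever Alice's
   output equals y', so Bob's probability of outputting x_y is at least
   Alice's probability of outputting y'.  Fix Bob's inputs y, y' and the
   unselected input of Alice, and let the selected input x_y range over both
   bits.  If the box is non-signalling, Bob's marginal does not depend on this
   bit, so summing the two bounds over x_y (for y' = 0 and y' = 1) squeezes
   them into equalities: Alice's probability of outputting 0 equals Bob's
   probability of outputting x_y at y' = 0.  The left-hand side does not depend
   on y and the right-hand side depends on only one of x_0, x_1, so all of
   Alice's marginals are one constant, which must be 1/2; then Bob's marginals
   at y' = 0 are 1/2 as well.  Finally, a 2x2 table with these marginals and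
   the racbox zero p(0, not x_y) = 0 is exactly the PR-box. *)

lemma alice_marg_sum:
  assumes "is_box p"
  shows "alice_marg p False x0 x1 y y' + alice_marg p True x0 x1 y y' = 1"
  using assms by (simp add: is_box_def alice_marg_def UNIV_bool)

lemma bob_marg_sum:
  assumes "is_box p"
  shows "bob_marg p False x0 x1 y y' + bob_marg p True x0 x1 y y' = 1"
proof -
  have "(\<Sum>a\<in>UNIV. \<Sum>b\<in>UNIV. p a b x0 x1 y y') = 1"
    using assms by (simp add: is_box_def)
  then show ?thesis by (simp add: bob_marg_def UNIV_bool)
qed

lemma racbox_alice_le_bob_selected:
  assumes "is_racbox p"
  shows "alice_marg p y' x0 x1 y y' \<le> bob_marg p (sel x0 x1 y) x0 x1 y y'"
proof -
  let ?c = "sel x0 x1 y"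
  have nonneg: "p (\<not> y') ?c x0 x1 y y' \<ge> 0"
    using assms by (simp add: is_racbox_def is_box_def)
  have "p y' (\<not> ?c) x0 x1 y y' = 0"
    using assms by (simp add: is_racbox_def)
  then have "alice_marg p y' x0 x1 y y' = p y' ?c x0 x1 y y'"
    by (cases ?c) (simp_all add: alice_marg_def UNIV_bool)
  also have "\<dots> \<le> bob_marg p ?c x0 x1 y y'"
    using nonneg by (cases y') (simp_all add: bob_marg_def UNIV_bool)
  finally show ?thesis .
qed

lemma squeeze_bool:
  fixes a b c :: "bool \<Rightarrow> real"
  assumes "b False + b True = 1" and "c False + c True = 1"
    and "\<And>v. a v \<le> b v" and "\<And>v. 1 - a v \<le> c v"
  shows "a v = b v"
  using assms(1,2) assms(3,4)[of False] assms(3,4)[of True] by (cases v) auto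

(* In a non-signalling racbox, P(a = 0) equals Bob's probability of outputting
   x_y at y' = 0 (Bob's marginal being independent of Alice's inputs). *)
lemma ns_racbox_alice_eq_bob_selected:
  assumes "is_ns_racbox p"
  shows "alice_marg p False x0 x1 y y' = bob_marg p (sel x0 x1 y) False False y False"
proof -
  have rac: "is_racbox p" and box: "is_box p"
    using assms by (simp_all add: is_ns_racbox_def is_racbox_def)
  have alice_ns: "alice_marg p a u0 u1 z z' = alice_marg p a u0 u1 y False" for a u0 u1 z z'
    using rac by (simp add: is_racbox_def)
  have bob_ns: "bob_marg p b u0 u1 y z' = bob_marg p b False False y z'" for b u0 u1 z'
    using assms by (simp add: is_ns_racbox_def)
  define X0 where "X0 v = (if y then x0 else v)" for v
  define X1 where "X1 v = (if y then v else x1)" for v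
  have sel_X: "sel (X0 v) (X1 v) y = v" for v
    by (simp add: sel_def X0_def X1_def)
  define a where "a v = alice_marg p False (X0 v) (X1 v) y False" for v
  have "a v = bob_marg p v False False y False" for v
  proof (rule squeeze_bool[where b = "\<lambda>v. bob_marg p v False False y False"
                                and c = "\<lambda>v. bob_marg p v False False y True"])
    show "bob_marg p False False False y False + bob_marg p True False False y False = 1"
      using bob_marg_sum[OF box] .
    show "bob_marg p False False False y True + bob_marg p True False False y True = 1"
      using bob_marg_sum[OF box] .
    show "a v \<le> bob_marg p v False False y False" for v
      using racbox_alice_le_bob_selected[OF rac, of False "X0 v" "X1 v" y]
        bob_ns[of v "X0 v" "X1 v" False]
      by (simp add: sel_X a_def)
    show "1 - a v \<le> bob_marg p v False False y True" for v
      using racbox_alice_le_bob_selected[OF rac, of True "X0 v" "X1 v" y]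
        alice_marg_sum[OF box, of "X0 v" "X1 v" y True]
        bob_ns[of v "X0 v" "X1 v" True] alice_ns[of False "X0 v" "X1 v" y True]
      by (simp add: sel_X a_def)
  qed
  moreover have "a (sel x0 x1 y) = alice_marg p False x0 x1 y y'"
    using alice_ns[of False x0 x1 y y'] by (simp add: a_def X0_def X1_def sel_def)
  ultimately show ?thesis
    by simp
qed

lemma ns_racbox_uniform_marginals:
  assumes "is_ns_racbox p"
  shows "alice_marg p a x0 x1 y y' = 1/2" and "bob_marg p b x0 x1 y False = 1/2"
proof -
  have box: "is_box p"
    using assms by (simp add: is_ns_racbox_def is_racbox_def)
  have bob_ns: "bob_marg p b u0 u1 z False = bob_marg p b False False z False" for b u0 u1 z
    using assms by (simp add: is_ns_racbox_def)
  have alice_ns: "alice_marg p False u0 u1 z z' = alice_marg p False u0 u1 True False"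
    for u0 u1 z z'
    using assms by (simp add: is_ns_racbox_def is_racbox_def)
  note eq = ns_racbox_alice_eq_bob_selected[OF assms]
  define c where "c = alice_marg p False False False False False"
  \<comment> \<open>With y = 0 the value depends only on x0, with y = 1 only on x1.\<close>
  have const: "alice_marg p False u0 u1 z z' = c" for u0 u1 z z'
  proof -
    have "alice_marg p False u0 u1 z z' = bob_marg p u1 False False True False"
      using alice_ns[of u0 u1 z z'] eq[of u0 u1 True False] by (simp add: sel_def)
    also have "\<dots> = bob_marg p False False False False False"
      using eq[of False u1 True False] eq[of False u1 False False] alice_ns[of False u1 False False]
      by (simp add: sel_def)
    also have "\<dots> = c"
      using eq[of False False False False] by (simp add: c_def sel_def)
    finally show ?thesis .
  qed
  have bob_c: "bob_marg p v False False z False = c" for v z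
    using const[of v v z False] eq[of v v z False] by (simp add: sel_def)
  have half: "c = 1/2"
    using bob_marg_sum[OF box, of False False False False] bob_c by simp
  show "alice_marg p a x0 x1 y y' = 1/2"
    using alice_marg_sum[OF box, of x0 x1 y y'] const half by (cases a) simp_all
  show "bob_marg p b x0 x1 y False = 1/2"
    using bob_c[of b y] bob_ns[of b x0 x1 y] half by simp
qed

lemma pr_table_from_marginals:
  fixes r :: "bool \<Rightarrow> bool \<Rightarrow> real"
  assumes rows: "\<And>a. r a False + r a True = 1/2"
    and column: "r False s + r True s = 1/2"
    and zero: "r False (\<not> s) = 0"
  shows "r a b = (if (a \<noteq> b) = s then 1/2 else 0)"
  using rows[of False] rows[of True] column zero by (cases a; cases b; cases s) auto

theorem mainTheorem2:
  fixes p :: box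
  assumes "is_ns_racbox p"
  defines "q \<equiv> (\<lambda>a b x y. p a b False x y False)"
  shows "\<forall>x y a b. q a b x y = (if (a \<noteq> b) = (x \<and> y) then 1/2 else 0)"
proof (intro allI)
  fix x y a b
  have "p False (\<not> sel False x y) False x y False = 0"
    using assms(1) by (simp add: is_ns_racbox_def is_racbox_def)
  then have zero: "q False (\<not> (x \<and> y)) x y = 0"
    by (cases y) (simp_all add: q_def sel_def)
  have rows: "q a' False x y + q a' True x y = 1/2" for a'
    using ns_racbox_uniform_marginals(1)[OF assms(1), of a' False x y False]
    by (simp add: q_def alice_marg_def UNIV_bool)
  have column: "q False (x \<and> y) x y + q True (x \<and> y) x y = 1/2"
    using ns_racbox_uniform_marginals(2)[OF assms(1), of "x \<and> y" False x y]
    by (simp add: q_def bob_marg_def UNIV_bool)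
  show "q a b x y = (if (a \<noteq> b) = (x \<and> y) then 1/2 else 0)"
    using pr_table_from_marginals[of "\<lambda>a b. q a b x y", OF rows column zero] .
qed

end
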